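(* Let $\mathbf W\in\mathbb R^{p\times d}$ and let $\sigma_1,\ldots,\sigma_p\in C^{0,1}_{\uparrow}(\mathbb R)$. Let $L_\theta$ denote the Lipschitz constant of $\mathbf x\mapsto\mathbf W^T\boldsymbol\sigma(\mathbf W\mathbf x)$, where $(\boldsymbol\sigma(\mathbf z))_i=\sigma_i(z_i)$. With $\boldsymbol\Sigma_\infty=\mathrm{diag}(\|\sigma_1'\|_\infty,\ldots,\|\sigma_p'\|_\infty)$ it holds that $$L_\theta\le\|\mathbf W^T\boldsymbol\Sigma_\infty\mathbf W\|=\|\sqrt{\boldsymbol\Sigma_\infty}\,\mathbf W\|^2\le L_{\boldsymbol\sigma}\|\mathbf W\|^2,$$ where $L_{\boldsymbol\sigma}=\max_i\mathrm{Lip}(\sigma_i)$ is the Lipschitz constant of $\boldsymbol\sigma$ and $\|\cdot\|$ is the spectral norm.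
   Context: $C^{0,1}_{\uparrow}(\mathbb R)$ denotes the set of Lipschitz-continuous increasing functions $\mathbb R\to\mathbb R$; for such $\sigma_i$, $\|\sigma_i'\|_\infty$ is the essential supremum of its derivative, i.e. its Lipschitz constant. *)

theory Defs
  imports "HOL-Analysis.Analysis"
begin

definition lip_const :: "('a::metric_space \<Rightarrow> 'b::metric_space) \<Rightarrow> real" where
  "lip_const f = Inf {L. L-lipschitz_on UNIV f}"

definition act_vec :: "('p::finite \<Rightarrow> real \<Rightarrow> real) \<Rightarrow> real^'p \<Rightarrow> real^'p" where
  "act_vec \<sigma> z = (\<chi> i. \<sigma> i (z $ i))"

definition diag_mat :: "('p::finite \<Rightarrow> real) \<Rightarrow> real^'p^'p" where
  "diag_mat c = (\<chi> i j. if i = j then c i else 0)"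

definition spec_norm :: "real^'n::finite^'m::finite \<Rightarrow> real" where
  "spec_norm A = onorm (\<lambda>x. A *v x)"

end

theory Submission imports Defs begin

text \<open>
  For a monotone Lipschitz function every secant slope lies in \<open>[0, Lip \<sigma>\<^sub>i]\<close>. Hence the
  difference of the layer at \<open>x\<close> and \<open>y\<close> is \<open>W\<^sup>T D W (x - y)\<close> for a diagonal matrix
  \<open>0 \<le> D \<le> \<Sigma>\<^sub>\<infinity>\<close>. Since \<open>W\<^sup>T D W = (\<surd>D W)\<^sup>T (\<surd>D W)\<close>, its spectral norm is \<open>\<parallel>\<surd>D W\<parallel>\<^sup>2\<close>,
  which is monotone in \<open>D\<close>; this gives the first bound and the identity, and
  \<open>\<surd>\<Sigma>\<^sub>\<infinity> \<le> \<surd>L\<^sub>\<sigma> I\<close> gives the last one.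
\<close>

lemma norm_matrix_vector_mult_le_spec_norm:
  "norm ((A::real^'n::finite^'m::finite) *v x) \<le> spec_norm A * norm x"
  unfolding spec_norm_def by (rule onorm) simp

lemma spec_norm_nonneg: "0 \<le> spec_norm (A::real^'n::finite^'m::finite)"
  unfolding spec_norm_def by (rule onorm_pos_le) simp

lemma spec_norm_le:
  assumes "\<And>x. norm ((A::real^'n::finite^'m::finite) *v x) \<le> b * norm x"
  shows "spec_norm A \<le> b"
  unfolding spec_norm_def by (rule onorm_le) (use assms in auto)

lemma inner_transpose_matrix_vector:
  "inner (transpose A *v u) v = inner u ((A::real^'n::finite^'m::finite) *v v)"
  by (metis dot_lmul_matrix transpose_transpose vector_transpose_matrix)

lemma spec_norm_transpose_le:
  "spec_norm (transpose (A::real^'n::finite^'m::finite)) \<le> spec_norm A"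
proof (rule spec_norm_le)
  fix u
  let ?w = "transpose A *v u"
  have "norm ?w * norm ?w = inner ?w ?w"
    by (simp add: dot_square_norm power2_eq_square)
  also have "\<dots> = inner u (A *v ?w)"
    by (rule inner_transpose_matrix_vector)
  also have "\<dots> \<le> norm u * (spec_norm A * norm ?w)"
    by (intro order_trans[OF norm_cauchy_schwarz] mult_left_mono
        norm_matrix_vector_mult_le_spec_norm norm_ge_zero)
  finally have "norm ?w * norm ?w \<le> (spec_norm A * norm u) * norm ?w"
    by (simp add: algebra_simps)
  then show "norm ?w \<le> spec_norm A * norm u"
    using spec_norm_nonneg[of A] by (cases "norm ?w = 0") auto
qed

lemma spec_norm_transpose:
  "spec_norm (transpose (A::real^'n::finite^'m::finite)) = spec_norm A"
  using spec_norm_transpose_le[of A] spec_norm_transpose_le[of "transpose A"] by simp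

lemma spec_norm_gram:
  "spec_norm (transpose A ** (A::real^'n::finite^'m::finite)) = (spec_norm A)\<^sup>2"
proof (rule antisym)
  let ?G = "transpose A ** A"
  show "spec_norm ?G \<le> (spec_norm A)\<^sup>2"
  proof (rule spec_norm_le)
    fix x
    have "norm (?G *v x) = norm (transpose A *v (A *v x))"
      by (simp add: matrix_vector_mul_assoc)
    also have "\<dots> \<le> spec_norm A * norm (A *v x)"
      using norm_matrix_vector_mult_le_spec_norm[of "transpose A"] by (simp add: spec_norm_transpose)
    also have "\<dots> \<le> spec_norm A * (spec_norm A * norm x)"
      by (intro mult_left_mono norm_matrix_vector_mult_le_spec_norm spec_norm_nonneg)
    finally show "norm (?G *v x) \<le> (spec_norm A)\<^sup>2 * norm x"
      by (simp add: power2_eq_square mult.assoc)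
  qed
  have "spec_norm A \<le> sqrt (spec_norm ?G)"
  proof (rule spec_norm_le)
    fix x
    have "(norm (A *v x))\<^sup>2 = inner (A *v x) (A *v x)"
      by (simp add: dot_square_norm)
    also have "\<dots> = inner (transpose A *v (A *v x)) x"
      by (metis inner_commute inner_transpose_matrix_vector)
    also have "\<dots> = inner (?G *v x) x"
      by (simp add: matrix_vector_mul_assoc)
    also have "\<dots> \<le> spec_norm ?G * norm x * norm x"
      by (intro order_trans[OF norm_cauchy_schwarz] mult_right_mono
          norm_matrix_vector_mult_le_spec_norm norm_ge_zero)
    also have "\<dots> = (sqrt (spec_norm ?G) * norm x)\<^sup>2"
      using spec_norm_nonneg[of ?G] by (simp add: power_mult_distrib power2_eq_square)
    finally show "norm (A *v x) \<le> sqrt (spec_norm ?G) * norm x"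
      by (rule power2_le_imp_le) (simp add: spec_norm_nonneg)
  qed
  then show "(spec_norm A)\<^sup>2 \<le> spec_norm ?G"
    using spec_norm_nonneg[of A] spec_norm_nonneg[of ?G] power_mono[of _ _ 2] by fastforce
qed

lemma spec_norm_scaleR: "spec_norm (c *\<^sub>R (A::real^'n::finite^'m::finite)) = \<bar>c\<bar> * spec_norm A"
proof -
  have "(\<lambda>x. (c *\<^sub>R A) *v x) = (\<lambda>x. c *\<^sub>R (A *v x))"
    by (simp add: fun_eq_iff vec_eq_iff matrix_vector_mult_def sum_distrib_left mult.assoc)
  then show ?thesis
    unfolding spec_norm_def by (simp add: onorm_scaleR)
qed

lemma diag_mat_mult_vec_nth: "(diag_mat c *v x) $ i = c i * x $ i"
proof -
  have "(\<Sum>j\<in>UNIV. (if i = j then c i else 0) * x $ j) = (\<Sum>j\<in>UNIV. if j = i then c i * x $ i else 0)"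
    by (rule sum.cong) auto
  then show ?thesis unfolding diag_mat_def matrix_vector_mult_def by simp
qed

lemma diag_mat_mult: "diag_mat a ** diag_mat b = diag_mat (\<lambda>i. a i * b i)"
proof -
  have "(\<Sum>k\<in>UNIV. (if i = k then a i else 0) * (if k = j then b k else 0))
      = (\<Sum>k\<in>UNIV. if k = i then (if i = j then a i * b i else 0) else 0)" for i j :: 'a
    by (rule sum.cong) auto
  then show ?thesis
    unfolding diag_mat_def matrix_matrix_mult_def by (simp add: vec_eq_iff)
qed

lemma transpose_diag_mat: "transpose (diag_mat a) = diag_mat a"
  unfolding diag_mat_def transpose_def by (simp add: vec_eq_iff)

lemma diag_mat_const_mult: "diag_mat (\<lambda>_. c) ** A = c *\<^sub>R A"
  by (simp add: vec_eq_iff matrix_vector_mult_def diag_mat_def matrix_matrix_mult_def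
      if_distrib[of "\<lambda>u. u * _"] cong: if_cong)

lemma spec_norm_diag_mult_mono:
  assumes "\<And>i. \<bar>a i\<bar> \<le> \<bar>b i\<bar>"
  shows "spec_norm (diag_mat a ** W) \<le> spec_norm (diag_mat b ** W)"
proof (rule spec_norm_le)
  fix x
  have "norm ((diag_mat a ** W) *v x) \<le> norm ((diag_mat b ** W) *v x)"
    by (rule norm_le_componentwise_cart)
      (simp add: diag_mat_mult_vec_nth abs_mult mult_right_mono assms flip: matrix_vector_mul_assoc)
  then show "norm ((diag_mat a ** W) *v x) \<le> spec_norm (diag_mat b ** W) * norm x"
    using norm_matrix_vector_mult_le_spec_norm order_trans by blast
qed

lemma spec_norm_weighted_gram:
  assumes "\<And>i. 0 \<le> c i"
  shows "spec_norm (transpose W ** diag_mat c ** W) = (spec_norm (diag_mat (\<lambda>i. sqrt (c i)) ** W))\<^sup>2"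
proof -
  let ?S = "diag_mat (\<lambda>i. sqrt (c i))"
  have "diag_mat c = transpose ?S ** ?S"
    using assms by (simp add: transpose_diag_mat diag_mat_mult)
  then have "transpose W ** diag_mat c ** W = transpose (?S ** W) ** (?S ** W)"
    by (simp add: matrix_transpose_mul matrix_mul_assoc)
  then show ?thesis by (simp add: spec_norm_gram)
qed

lemma spec_norm_weighted_gram_mono:
  assumes "\<And>i. 0 \<le> d i" and "\<And>i. d i \<le> c i"
  shows "spec_norm (transpose W ** diag_mat d ** W) \<le> spec_norm (transpose W ** diag_mat c ** W)"
proof -
  have "\<And>i. 0 \<le> c i" using assms order_trans by blast
  moreover have "spec_norm (diag_mat (\<lambda>i. sqrt (d i)) ** W) \<le> spec_norm (diag_mat (\<lambda>i. sqrt (c i)) ** W)"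
    by (rule spec_norm_diag_mult_mono)
      (metis assms order_trans abs_of_nonneg real_sqrt_ge_zero real_sqrt_le_mono)
  ultimately show ?thesis
    using assms(1) by (simp add: spec_norm_weighted_gram power_mono spec_norm_nonneg)
qed

lemma lipschitz_on_lip_const:
  fixes f :: "'a::metric_space \<Rightarrow> 'b::metric_space"
  assumes "\<exists>L. L-lipschitz_on UNIV f"
  shows "(lip_const f)-lipschitz_on UNIV f"
proof (rule lipschitz_onI)
  have nonempty: "{L. L-lipschitz_on UNIV f} \<noteq> {}"
    using assms by auto
  then show "0 \<le> lip_const f"
    unfolding lip_const_def by (rule cInf_greatest) (auto intro: lipschitz_on_nonneg)
  fix x y
  show "dist (f x) (f y) \<le> lip_const f * dist x y"
  proof (cases "x = y")
    case False
    have "dist (f x) (f y) / dist x y \<le> lip_const f"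
      unfolding lip_const_def using nonempty
    proof (rule cInf_greatest)
      fix L assume "L \<in> {L. L-lipschitz_on UNIV f}"
      then show "dist (f x) (f y) / dist x y \<le> L"
        using False by (simp add: divide_le_eq lipschitz_onD)
    qed
    then show ?thesis
      using False by (simp add: divide_le_eq)
  qed simp
qed

lemma lip_const_le:
  assumes "L-lipschitz_on UNIV f"
  shows "lip_const f \<le> L"
  unfolding lip_const_def
  by (rule cInf_lower) (use assms in \<open>auto intro: lipschitz_on_nonneg simp: bdd_below_def\<close>)

lemma mono_lipschitz_secant_slope:
  fixes f :: "real \<Rightarrow> real"
  assumes "mono f" and "L-lipschitz_on UNIV f"
  obtains s where "0 \<le> s" and "s \<le> L" and "f a - f b = s * (a - b)"
proof (cases "a = b")
  case True
  then show thesis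
    using that[of 0] lipschitz_on_nonneg[OF assms(2)] by simp
next
  case False
  let ?s = "(f a - f b) / (a - b)"
  have "0 \<le> ?s"
    using monoD[OF assms(1), of a b] monoD[OF assms(1), of b a]
    by (cases "a \<le> b") (auto simp: zero_le_divide_iff)
  moreover have "\<bar>f a - f b\<bar> \<le> L * \<bar>a - b\<bar>"
    using lipschitz_onD[OF assms(2)] by (simp add: dist_real_def)
  then have "\<bar>?s\<bar> \<le> L"
    using False by (simp add: abs_divide pos_divide_le_eq)
  then have "?s \<le> L"
    by (rule order_trans[OF abs_ge_self])
  moreover have "f a - f b = ?s * (a - b)"
    using False by simp
  ultimately show thesis
    by (rule that)
qed

lemma act_vec_diff_eq_diag_secant:
  assumes "\<And>i. mono (\<sigma> i)" and "\<And>i. (L i)-lipschitz_on UNIV (\<sigma> i)"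
  obtains d where "\<And>i. 0 \<le> d i" and "\<And>i. d i \<le> L i"
    and "act_vec \<sigma> a - act_vec \<sigma> b = diag_mat d *v (a - b)"
proof -
  have "\<exists>s. 0 \<le> s \<and> s \<le> L i \<and> \<sigma> i (a $ i) - \<sigma> i (b $ i) = s * (a $ i - b $ i)" for i
    using mono_lipschitz_secant_slope[OF assms(1,2), of i "a $ i" "b $ i"] by blast
  then obtain d where d: "\<And>i. 0 \<le> d i \<and> d i \<le> L i
      \<and> \<sigma> i (a $ i) - \<sigma> i (b $ i) = d i * (a $ i - b $ i)"
    by metis
  show thesis
    by (rule that[of d]) (simp_all add: d vec_eq_iff act_vec_def diag_mat_mult_vec_nth)
qed

lemma lipschitz_on_monotone_layer:
  fixes W :: "real^'d::finite^'p::finite"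
  assumes "\<And>i. mono (\<sigma> i)" and "\<And>i. (L i)-lipschitz_on UNIV (\<sigma> i)"
  shows "(spec_norm (transpose W ** diag_mat L ** W))-lipschitz_on UNIV
    (\<lambda>x. transpose W *v act_vec \<sigma> (W *v x))"
proof (rule lipschitz_onI)
  fix x y :: "real^'d"
  obtain d where d_nonneg: "\<And>i. 0 \<le> d i" and d_le: "\<And>i. d i \<le> L i"
    and act_diff: "act_vec \<sigma> (W *v x) - act_vec \<sigma> (W *v y) = diag_mat d *v (W *v x - W *v y)"
    using act_vec_diff_eq_diag_secant[where \<sigma> = \<sigma> and L = L, OF assms] by blast
  have "transpose W *v act_vec \<sigma> (W *v x) - transpose W *v act_vec \<sigma> (W *v y)
      = transpose W *v (act_vec \<sigma> (W *v x) - act_vec \<sigma> (W *v y))"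
    by (simp only: matrix_vector_mult_diff_distrib)
  also have "\<dots> = transpose W *v (diag_mat d *v (W *v (x - y)))"
    by (simp only: act_diff matrix_vector_mult_diff_distrib)
  also have "\<dots> = (transpose W ** diag_mat d ** W) *v (x - y)"
    by (simp only: matrix_vector_mul_assoc matrix_mul_assoc)
  finally have "dist (transpose W *v act_vec \<sigma> (W *v x)) (transpose W *v act_vec \<sigma> (W *v y))
      = norm ((transpose W ** diag_mat d ** W) *v (x - y))"
    by (simp only: dist_norm)
  also have "\<dots> \<le> spec_norm (transpose W ** diag_mat d ** W) * dist x y"
    unfolding dist_norm by (rule norm_matrix_vector_mult_le_spec_norm)
  also have "\<dots> \<le> spec_norm (transpose W ** diag_mat L ** W) * dist x y"
    by (intro mult_right_mono spec_norm_weighted_gram_mono d_nonneg d_le zero_le_dist)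
  finally show "dist (transpose W *v act_vec \<sigma> (W *v x)) (transpose W *v act_vec \<sigma> (W *v y))
      \<le> spec_norm (transpose W ** diag_mat L ** W) * dist x y" .
qed (rule spec_norm_nonneg)

theorem proposition5:
  fixes W :: "real^'d::finite^'p::finite"
    and \<sigma> :: "'p \<Rightarrow> real \<Rightarrow> real"
  assumes mono: "\<And>i. mono (\<sigma> i)"
    and lip: "\<And>i. \<exists>L. L-lipschitz_on UNIV (\<sigma> i)"
  defines "Sigma_inf \<equiv> diag_mat (\<lambda>i. lip_const (\<sigma> i))"
    and "L_theta \<equiv> lip_const (\<lambda>x::real^'d. transpose W *v act_vec \<sigma> (W *v x))"
    and "L_sigma \<equiv> Max (range (\<lambda>i. lip_const (\<sigma> i)))"
  shows "L_theta \<le> spec_norm (transpose W ** Sigma_inf ** W)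
    \<and> spec_norm (transpose W ** Sigma_inf ** W)
        = (spec_norm (diag_mat (\<lambda>i. sqrt (lip_const (\<sigma> i))) ** W))\<^sup>2
    \<and> (spec_norm (diag_mat (\<lambda>i. sqrt (lip_const (\<sigma> i))) ** W))\<^sup>2
        \<le> L_sigma * (spec_norm W)\<^sup>2"
proof -
  define l where "l i = lip_const (\<sigma> i)" for i
  have l_lip: "(l i)-lipschitz_on UNIV (\<sigma> i)" for i
    unfolding l_def by (rule lipschitz_on_lip_const[OF lip])
  have l_nonneg: "0 \<le> l i" for i
    using l_lip by (rule lipschitz_on_nonneg)
  have l_le: "l i \<le> L_sigma" for i
    unfolding L_sigma_def l_def by (rule Max_ge) auto
  have L_sigma_nonneg: "0 \<le> L_sigma"
    using l_nonneg l_le order_trans by blast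
  have "L_theta \<le> spec_norm (transpose W ** Sigma_inf ** W)"
    unfolding L_theta_def Sigma_inf_def l_def[symmetric]
    by (rule lip_const_le[OF lipschitz_on_monotone_layer[OF mono l_lip]])
  moreover have "spec_norm (transpose W ** Sigma_inf ** W) = (spec_norm (diag_mat (\<lambda>i. sqrt (l i)) ** W))\<^sup>2"
    unfolding Sigma_inf_def l_def[symmetric] by (rule spec_norm_weighted_gram[OF l_nonneg])
  moreover
  have "spec_norm (diag_mat (\<lambda>i. sqrt (l i)) ** W) \<le> spec_norm (diag_mat (\<lambda>_. sqrt L_sigma) ** W)"
    by (rule spec_norm_diag_mult_mono) (simp add: l_nonneg l_le L_sigma_nonneg)
  then have "(spec_norm (diag_mat (\<lambda>i. sqrt (l i)) ** W))\<^sup>2 \<le> (sqrt L_sigma * spec_norm W)\<^sup>2"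
    using L_sigma_nonneg by (intro power_mono spec_norm_nonneg) (simp add: diag_mat_const_mult spec_norm_scaleR)
  then have "(spec_norm (diag_mat (\<lambda>i. sqrt (l i)) ** W))\<^sup>2 \<le> L_sigma * (spec_norm W)\<^sup>2"
    using L_sigma_nonneg by (simp add: power_mult_distrib)
  ultimately show ?thesis
    unfolding l_def by simp
qed

end
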